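(* Let $d$ be a positive integer. There exists a matrix $A\in\mathbb{R}^{[4]\times[3]}$ such that (i) $A$ does not have an elimination ordering, and (ii) for every vector $b\in\mathbb{R}^{[4]}$ the solution graph $G(R(A,b))$ is connected.
   Context: Fix a positive integer $d$ and let $D=\{0,1,\dots,d\}$; $[n]=\{1,\dots,n\}$. For $A\in\mathbb{R}^{[m]\times[n]}$ and $b\in\mathbb{R}^{[m]}$, $R(A,b)=\{x\in D^{[n]} : Ax\ge b\}$. For $R\subseteq D^{[n]}$, the solution graph $G(R)$ is the undirected graph with vertex set $R$ in which $x,y$ are adjacent iff they differ in exactly one coordinate. A matrix $A=(a_{ij})$ with column index set $J$ can be eliminated at column $j\in J$ if (i) for every row $i$ with $a_{ij}>0$ we have $a_{ij'}=0$ for all $j'\in J\setminus\{j\}$, or (ii) for every row $i$ with $a_{ij}<0$ we have $a_{ij'}=0$ for all $j'\in J\setminus\{j\}$. For $J'\subseteq[n]$, $\mathrm{elm}(A,J')$ is the submatrix of $A$ obtained by deleting the columns indexed by $J'$. A sequence $(j_1,\dots,j_n)$ of the elements of $[n]$ is an elimination ordering (EO) of $A$ if for every $t\in[n]$ the matrix $\mathrm{elm}(A,\{j_1,\dots,j_{t-1}\})$ can be eliminated at column $j_t$. *)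

theory Defs
  imports Complex_Main "HOL-Library.FuncSet"
begin

text \<open>Matrices A in R^{[m] x [n]} are functions nat => nat => real (only entries with
row index in {1..m} and column index in {1..n} are used); vectors b in R^{[m]} are
functions nat => real; points x in D^{[n]} with D = {0..d} are extensional functions
on {1..n} with values in {0..d}.\<close>

definition sol_set :: "nat \<Rightarrow> nat \<Rightarrow> nat \<Rightarrow> (nat \<Rightarrow> nat \<Rightarrow> real) \<Rightarrow> (nat \<Rightarrow> real) \<Rightarrow> (nat \<Rightarrow> nat) set" where
  "sol_set d m n A b =
     {x \<in> {1..n} \<rightarrow>\<^sub>E {0..d}. \<forall>i\<in>{1..m}. (\<Sum>j=1..n. A i j * real (x j)) \<ge> b i}"

definition sg_adj :: "nat \<Rightarrow> (nat \<Rightarrow> nat) set \<Rightarrow> ((nat \<Rightarrow> nat) \<times> (nat \<Rightarrow> nat)) set" where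
  "sg_adj n R = {(x, y). x \<in> R \<and> y \<in> R \<and> card {j\<in>{1..n}. x j \<noteq> y j} = 1}"

definition sg_connected :: "nat \<Rightarrow> (nat \<Rightarrow> nat) set \<Rightarrow> bool" where
  "sg_connected n R \<longleftrightarrow> (\<forall>x\<in>R. \<forall>y\<in>R. (x, y) \<in> (sg_adj n R)\<^sup>*)"

definition can_elim :: "(nat \<Rightarrow> nat \<Rightarrow> real) \<Rightarrow> nat \<Rightarrow> nat set \<Rightarrow> nat \<Rightarrow> bool" where
  "can_elim A m J j \<longleftrightarrow>
     (\<forall>i\<in>{1..m}. A i j > 0 \<longrightarrow> (\<forall>j'\<in>J - {j}. A i j' = 0)) \<or>
     (\<forall>i\<in>{1..m}. A i j < 0 \<longrightarrow> (\<forall>j'\<in>J - {j}. A i j' = 0))"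

definition is_EO :: "(nat \<Rightarrow> nat \<Rightarrow> real) \<Rightarrow> nat \<Rightarrow> nat \<Rightarrow> nat list \<Rightarrow> bool" where
  "is_EO A m n js \<longleftrightarrow> distinct js \<and> set js = {1..n} \<and>
     (\<forall>t<n. can_elim A m ({1..n} - set (take t js)) (js ! t))"

definition has_EO :: "(nat \<Rightarrow> nat \<Rightarrow> real) \<Rightarrow> nat \<Rightarrow> nat \<Rightarrow> bool" where
  "has_EO A m n \<longleftrightarrow> (\<exists>js. is_EO A m n js)"

end

theory Submission
  imports Defs
begin

text \<open>Take the constraints
  \<open>- x\<^sub>1 - x\<^sub>2 \<ge> b\<^sub>1\<close>, \<open>- x\<^sub>1 + x\<^sub>2 \<ge> b\<^sub>2\<close>, \<open>x\<^sub>1 - x\<^sub>3 \<ge> b\<^sub>3\<close>, \<open>x\<^sub>1 + x\<^sub>3 \<ge> b\<^sub>4\<close>.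
  Every column meets both signs in rows that also involve another column, so not even the
  first step of an elimination ordering is possible. For fixed \<open>x\<^sub>1\<close> the feasible values of
  \<open>x\<^sub>2\<close> and of \<open>x\<^sub>3\<close> form two independent intervals, so each slice \<open>x\<^sub>1 = c\<close> is a box and
  hence connected. As \<open>x\<^sub>1\<close> grows the \<open>x\<^sub>2\<close>-interval shrinks and the \<open>x\<^sub>3\<close>-interval grows;
  so to walk from \<open>x\<close> towards a solution \<open>y\<close> with larger first coordinate, first set
  \<open>x\<^sub>2 := y\<^sub>2\<close> and then raise \<open>x\<^sub>1\<close> by one, staying feasible throughout.\<close>

lemma rtrancl_connected_by_levels:
  fixes level :: "'a \<Rightarrow> nat"
  assumes "sym E"
    and same_level: "\<And>x y. x \<in> R \<Longrightarrow> y \<in> R \<Longrightarrow> level x = level y \<Longrightarrow> (x, y) \<in> E\<^sup>*"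
    and level_up: "\<And>x y. x \<in> R \<Longrightarrow> y \<in> R \<Longrightarrow> level x < level y \<Longrightarrow>
                     \<exists>z\<in>R. level z = Suc (level x) \<and> (x, z) \<in> E\<^sup>*"
    and "x \<in> R" "y \<in> R"
  shows "(x, y) \<in> E\<^sup>*"
proof -
  have upward: "(x, y) \<in> E\<^sup>*" if "x \<in> R" "y \<in> R" "level x \<le> level y" for x y
    using that
  proof (induction "level y - level x" arbitrary: x)
    case 0
    then show ?case by (intro same_level) auto
  next
    case (Suc k)
    then obtain z where "z \<in> R" "level z = Suc (level x)" "(x, z) \<in> E\<^sup>*"
      using level_up by (metis diff_is_0_eq' le_neq_implies_less nat.distinct(1))
    moreover have "(z, y) \<in> E\<^sup>*"
      using Suc.hyps(1)[of z] Suc.prems Suc.hyps(2) calculation by simp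
    ultimately show ?case by simp
  qed
  show ?thesis
  proof (cases "level x \<le> level y")
    case True
    then show ?thesis using upward assms by blast
  next
    case False
    then have "(y, x) \<in> E\<^sup>*" using upward assms by simp
    then show ?thesis using sym_rtrancl[OF \<open>sym E\<close>] by (auto dest: symD)
  qed
qed

lemma sym_sg_adj: "sym (sg_adj n R)"
proof (rule symI)
  fix x y assume "(x, y) \<in> sg_adj n R"
  moreover have "{j\<in>{1..n}. y j \<noteq> x j} = {j\<in>{1..n}. x j \<noteq> y j}" by auto
  ultimately show "(y, x) \<in> sg_adj n R" unfolding sg_adj_def by simp
qed

lemma sg_adj_fun_upd:
  assumes "x \<in> R" "x(j := v) \<in> R" "j \<in> {1..n}"
  shows "(x, x(j := v)) \<in> (sg_adj n R)\<^sup>*"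
proof (cases "v = x j")
  case False
  then have "{j'\<in>{1..n}. x j' \<noteq> (x(j := v)) j'} = {j}" using assms(3) by auto
  then have "(x, x(j := v)) \<in> sg_adj n R" using assms unfolding sg_adj_def by simp
  then show ?thesis by blast
qed simp

lemma fun_upd_in_PiE_same:
  assumes "f \<in> Pi\<^sub>E S T" "j \<in> S" "v \<in> T j"
  shows "f(j := v) \<in> Pi\<^sub>E S T"
  using PiE_fun_upd[OF assms(3,1)] assms(2) by (simp add: insert_absorb)

lemma has_EO_imp_can_elim_first:
  assumes "has_EO A m n" "n \<ge> 1"
  shows "\<exists>j\<in>{1..n}. can_elim A m {1..n} j"
proof -
  obtain js where js: "is_EO A m n js" using assms(1) unfolding has_EO_def by blast
  then have "set js = {1..n}" unfolding is_EO_def by simp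
  with assms(2) have "js ! 0 \<in> {1..n}"
    by (metis atLeastAtMost_iff le_refl length_pos_if_in_set nth_mem)
  moreover have "can_elim A m {1..n} (js ! 0)"
    using js assms(2) unfolding is_EO_def by fastforce
  ultimately show ?thesis by blast
qed

text \<open>Entries outside rows \<open>1..4\<close> and columns \<open>1..3\<close> are never inspected.\<close>
definition A0 :: "nat \<Rightarrow> nat \<Rightarrow> real" where
  "A0 i j = [[-1, -1, 0], [-1, 1, 0], [1, 0, -1], [1, 0, 1]] ! (i - 1) ! (j - 1)"

lemma A0_no_first_elimination:
  assumes "j \<in> {1..3}"
  shows "\<not> can_elim A0 4 {1..3} j"
proof -
  have "{1..4::nat} = {1, 2, 3, 4}" "{1..3::nat} = {1, 2, 3}" by auto
  moreover have "j = 1 \<or> j = 2 \<or> j = 3" using assms by auto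
  ultimately show ?thesis by (elim disjE) (simp_all add: can_elim_def A0_def insert_Diff_if)
qed

lemma A0_no_EO: "\<not> has_EO A0 4 3"
  using has_EO_imp_can_elim_first[of A0 4 3] A0_no_first_elimination by auto

lemma mem_sol_set_A0:
  "x \<in> sol_set d 4 3 A0 b \<longleftrightarrow> x \<in> {1..3} \<rightarrow>\<^sub>E {0..d} \<and>
     - real (x 1) - real (x 2) \<ge> b 1 \<and> real (x 2) - real (x 1) \<ge> b 2 \<and>
     real (x 1) - real (x 3) \<ge> b 3 \<and> real (x 1) + real (x 3) \<ge> b 4"
proof -
  have "{1..4::nat} = {1, 2, 3, 4}" "{1..3::nat} = {1, 2, 3}" by auto
  then show ?thesis unfolding sol_set_def by (simp add: A0_def)
qed

lemma sol_set_A0_same_first: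
  assumes x: "x \<in> sol_set d 4 3 A0 b" and y: "y \<in> sol_set d 4 3 A0 b" and "x 1 = y 1"
  shows "(x, y) \<in> (sg_adj 3 (sol_set d 4 3 A0 b))\<^sup>*"
proof -
  let ?R = "sol_set d 4 3 A0 b"
  have xP: "x \<in> {1..3} \<rightarrow>\<^sub>E {0..d}" and yP: "y \<in> {1..3} \<rightarrow>\<^sub>E {0..d}"
    using x y by (auto simp: mem_sol_set_A0)
  let ?x' = "x(2 := y 2)"
  have x'P: "?x' \<in> {1..3} \<rightarrow>\<^sub>E {0..d}"
    using yP by (intro fun_upd_in_PiE_same[OF xP]) auto
  have yP': "?x'(3 := y 3) \<in> {1..3} \<rightarrow>\<^sub>E {0..d}"
    using yP by (intro fun_upd_in_PiE_same[OF x'P]) auto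
  have x': "?x' \<in> ?R" and y': "?x'(3 := y 3) \<in> ?R"
    using x y x'P yP' \<open>x 1 = y 1\<close> by (simp_all add: mem_sol_set_A0)
  have "(x, ?x') \<in> (sg_adj 3 ?R)\<^sup>*" by (rule sg_adj_fun_upd[OF x x']) simp
  also have "(?x', ?x'(3 := y 3)) \<in> (sg_adj 3 ?R)\<^sup>*" by (rule sg_adj_fun_upd[OF x' y']) simp
  also have "?x'(3 := y 3) = y"
  proof (rule PiE_ext[OF yP' yP])
    fix i :: nat
    assume "i \<in> {1..3}"
    then have "i = 1 \<or> i = 2 \<or> i = 3" by auto
    then show "(?x'(3 := y 3)) i = y i" using \<open>x 1 = y 1\<close> by auto
  qed
  finally show ?thesis .
qed

lemma sol_set_A0_first_up:
  assumes x: "x \<in> sol_set d 4 3 A0 b" and y: "y \<in> sol_set d 4 3 A0 b" and "x 1 < y 1"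
  shows "\<exists>z\<in>sol_set d 4 3 A0 b. z 1 = Suc (x 1) \<and> (x, z) \<in> (sg_adj 3 (sol_set d 4 3 A0 b))\<^sup>*"
proof -
  let ?R = "sol_set d 4 3 A0 b"
  have xP: "x \<in> {1..3} \<rightarrow>\<^sub>E {0..d}" and yP: "y \<in> {1..3} \<rightarrow>\<^sub>E {0..d}"
    using x y by (auto simp: mem_sol_set_A0)
  have "Suc (x 1) \<le> d" using \<open>x 1 < y 1\<close> yP by force
  let ?x' = "x(2 := y 2)"
  let ?z = "?x'(1 := Suc (x 1))"
  have x'P: "?x' \<in> {1..3} \<rightarrow>\<^sub>E {0..d}"
    using yP by (intro fun_upd_in_PiE_same[OF xP]) auto
  have zP: "?z \<in> {1..3} \<rightarrow>\<^sub>E {0..d}"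
    using \<open>Suc (x 1) \<le> d\<close> by (intro fun_upd_in_PiE_same[OF x'P]) auto
  have "real (x 1) + 1 \<le> real (y 1)" using \<open>x 1 < y 1\<close> by linarith
  then have x': "?x' \<in> ?R" and z: "?z \<in> ?R"
    using x y x'P zP by (simp_all add: mem_sol_set_A0)
  have "(x, ?x') \<in> (sg_adj 3 ?R)\<^sup>*" by (rule sg_adj_fun_upd[OF x x']) simp
  also have "(?x', ?z) \<in> (sg_adj 3 ?R)\<^sup>*" by (rule sg_adj_fun_upd[OF x' z]) simp
  finally have "(x, ?z) \<in> (sg_adj 3 ?R)\<^sup>*" .
  moreover have "?z 1 = Suc (x 1)" by simp
  ultimately show ?thesis using z by blast
qed

lemma sol_set_A0_connected: "sg_connected 3 (sol_set d 4 3 A0 b)"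
  unfolding sg_connected_def
proof (intro ballI)
  fix x y
  assume "x \<in> sol_set d 4 3 A0 b" "y \<in> sol_set d 4 3 A0 b"
  with sol_set_A0_same_first sol_set_A0_first_up
  show "(x, y) \<in> (sg_adj 3 (sol_set d 4 3 A0 b))\<^sup>*"
    by (rule rtrancl_connected_by_levels[OF sym_sg_adj, where level = "\<lambda>x. x 1"])
qed

theorem lemma1:
  fixes d :: nat
  assumes "d \<ge> 1"
  shows "\<exists>A :: nat \<Rightarrow> nat \<Rightarrow> real.
           \<not> has_EO A 4 3 \<and> (\<forall>b :: nat \<Rightarrow> real. sg_connected 3 (sol_set d 4 3 A b))"
  using A0_no_EO sol_set_A0_connected by blast

end
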